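(* For every integer $n\ge0$, $U_n(x,y,a;q)=\mathbb{F}(aD_{xy})\{P_n(x,y)\}$.
   Context: $q$ is a fixed complex number with $0<|q|<1$; $(a;q)_n=\prod_{i=0}^{n-1}(1-aq^i)$; ${n\brack k}=\frac{(q;q)_n}{(q;q)_k(q;q)_{n-k}}$. $P_n(x,y)=\prod_{i=0}^{n-1}(x-q^iy)$ and $U_n(x,y,a;q)=\sum_{k=0}^n{n\brack k}(-1)^kq^{\binom k2}a^kP_{n-k}(x,y)$. The homogeneous $q$-difference operator acting on functions of $(x,y)$ is $D_{xy}\{f(x,y)\}=\frac{f(x,q^{-1}y)-f(qx,y)}{x-q^{-1}y}$, and the homogeneous $q$-shift operator is $\mathbb{F}(aD_{xy})=\sum_{n=0}^\infty\frac{(-1)^nq^{\binom n2}(aD_{xy})^n}{(q;q)_n}$ (with $D_{xy}^0$ the identity). *)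

theory Defs
  imports "HOL-Analysis.Analysis"
begin

definition qpoch :: "complex \<Rightarrow> complex \<Rightarrow> nat \<Rightarrow> complex" where
  "qpoch a q n = (\<Prod>i<n. (1 - a * q ^ i))"

definition qbinom :: "complex \<Rightarrow> nat \<Rightarrow> nat \<Rightarrow> complex" where
  "qbinom q n k = qpoch q q n / (qpoch q q k * qpoch q q (n - k))"

definition Pn :: "complex \<Rightarrow> nat \<Rightarrow> complex \<Rightarrow> complex \<Rightarrow> complex" where
  "Pn q n x y = (\<Prod>i<n. (x - q ^ i * y))"

definition Upoly :: "nat \<Rightarrow> complex \<Rightarrow> complex \<Rightarrow> complex \<Rightarrow> complex \<Rightarrow> complex" where
  "Upoly n x y a q = (\<Sum>k\<le>n. qbinom q n k * (-1) ^ k * q ^ (k choose 2) * a ^ k * Pn q (n - k) x y)"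

text \<open>Homogeneous q-difference operator D_xy; the difference quotient is
  extended to the line x = y/q by its limit (removable singularity), as is
  implicit in the paper where D_xy acts on polynomials.\<close>
definition Dxy :: "complex \<Rightarrow> (complex \<Rightarrow> complex \<Rightarrow> complex) \<Rightarrow> complex \<Rightarrow> complex \<Rightarrow> complex" where
  "Dxy q f = (\<lambda>x y. Lim (at x) (\<lambda>t. (f t (y / q) - f (q * t) y) / (t - y / q)))"

definition qshift :: "complex \<Rightarrow> complex \<Rightarrow> (complex \<Rightarrow> complex \<Rightarrow> complex) \<Rightarrow> complex \<Rightarrow> complex \<Rightarrow> complex" where
  "qshift q a f = (\<lambda>x y. (\<Sum>m. (-1) ^ m * q ^ (m choose 2) * a ^ m * ((Dxy q ^^ m) f) x y / qpoch q q m))"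

end

theory Submission
  imports Defs
begin

text \<open>The operator \<open>D\<^sub>x\<^sub>y\<close> lowers \<open>P\<^sub>n\<close>: \<open>D\<^sub>x\<^sub>y P\<^sub>n = (1 - q\<^sup>n) P\<^sub>n\<^sub>-\<^sub>1\<close>. Iterating,
  \<open>D\<^sub>x\<^sub>y\<^sup>k P\<^sub>n = (1 - q\<^sup>n) \<cdots> (1 - q\<^sup>n\<^sup>-\<^sup>k\<^sup>+\<^sup>1) P\<^sub>n\<^sub>-\<^sub>k\<close>, which vanishes for \<open>k > n\<close> and equals
  \<open>(q;q)\<^sub>n / (q;q)\<^sub>n\<^sub>-\<^sub>k P\<^sub>n\<^sub>-\<^sub>k\<close> otherwise. So the series \<open>\<bbbF>(aD\<^sub>x\<^sub>y) P\<^sub>n\<close> is a finite sum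
  whose \<open>k\<close>-th coefficient \<open>(q;q)\<^sub>n / ((q;q)\<^sub>k (q;q)\<^sub>n\<^sub>-\<^sub>k)\<close> is the Gaussian binomial of \<open>U\<^sub>n\<close>.\<close>

definition qfalling :: "complex \<Rightarrow> nat \<Rightarrow> nat \<Rightarrow> complex" where
  "qfalling q n m = (\<Prod>i<m. 1 - q ^ (n - i))"

lemma qfalling_eq_0:
  assumes "n < m"
  shows "qfalling q n m = 0"
  unfolding qfalling_def using assms by (intro prod_zero bexI[of _ n]) auto

lemma qfalling_mult_qpoch:
  assumes "m \<le> n"
  shows "qfalling q n m * qpoch q q (n - m) = qpoch q q n"
  using assms
proof (induction m)
  case 0
  then show ?case by (simp add: qfalling_def)
next
  case (Suc m)
  have "n - m = Suc (n - Suc m)"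
    using Suc.prems by simp
  then have "qpoch q q (n - m) = (1 - q ^ (n - m)) * qpoch q q (n - Suc m)"
    unfolding qpoch_def by (simp add: mult.commute)
  then show ?case
    using Suc by (simp add: qfalling_def mult.assoc)
qed

lemma qpoch_nonzero:
  assumes "norm q < 1"
  shows "qpoch q q n \<noteq> 0"
proof -
  have "norm (q * q ^ i) < 1" for i
    using assms by (cases "q = 0") (simp_all add: norm_mult norm_power power_Suc_less_one flip: power_Suc)
  then have "1 - q * q ^ i \<noteq> 0" for i
    by (metis norm_one order.irrefl right_minus_eq)
  then show ?thesis
    unfolding qpoch_def by simp
qed

lemma qbinom_eq_qfalling_div:
  assumes "norm q < 1" and "m \<le> n"
  shows "qbinom q n m = qfalling q n m / qpoch q q m"
  using qfalling_mult_qpoch[OF assms(2), of q] qpoch_nonzero[OF assms(1)]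
  unfolding qbinom_def by (simp add: field_simps)

lemma Pn_Suc_div:
  assumes "q \<noteq> 0"
  shows "Pn q (Suc n) t (y / q) = (t - y / q) * Pn q n t y"
  unfolding Pn_def using assms
  by (simp add: prod.lessThan_Suc_shift del: prod.lessThan_Suc)

lemma Pn_mult_left:
  assumes "q \<noteq> 0"
  shows "Pn q n (q * t) y = q ^ n * Pn q n t (y / q)"
proof -
  have "Pn q n (q * t) y = (\<Prod>i<n. q * (t - q ^ i * (y / q)))"
    unfolding Pn_def by (rule prod.cong) (use assms in \<open>auto simp: field_simps\<close>)
  then show ?thesis
    unfolding Pn_def by (simp add: prod.distrib)
qed

lemma Dxy_Pn:
  assumes "q \<noteq> 0"
  shows "Dxy q (\<lambda>x y. c * Pn q n x y) = (\<lambda>x y. c * (1 - q ^ n) * Pn q (n - 1) x y)"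
proof (intro ext)
  fix x y :: complex
  define h where "h t = c * (1 - q ^ n) * Pn q (n - 1) t y" for t
  have quotient_eq: "(c * Pn q n t (y / q) - c * Pn q n (q * t) y) / (t - y / q) = h t"
    if "t \<noteq> y / q" for t
  proof (cases n)
    case 0
    then show ?thesis by (simp add: h_def Pn_def)
  next
    case (Suc k)
    have "c * Pn q n t (y / q) - c * Pn q n (q * t) y = c * (1 - q ^ n) * (t - y / q) * Pn q k t y"
      using assms by (simp add: Suc Pn_mult_left Pn_Suc_div algebra_simps)
    then show ?thesis
      using that by (simp add: h_def Suc)
  qed
  \<comment> \<open>The quotient agrees with the polynomial \<open>h\<close> off \<open>t = y/q\<close>, so the limit taken by \<open>Dxy\<close> is \<open>h x\<close>.\<close>
  have "\<forall>\<^sub>F t in at x. h t = (c * Pn q n t (y / q) - c * Pn q n (q * t) y) / (t - y / q)"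
    by (rule eventually_mono[OF eventually_neq_at_within[where x = "y / q"]]) (simp add: quotient_eq)
  moreover have "(h \<longlongrightarrow> h x) (at x)"
    unfolding h_def Pn_def by (intro tendsto_intros)
  ultimately have "((\<lambda>t. (c * Pn q n t (y / q) - c * Pn q n (q * t) y) / (t - y / q)) \<longlongrightarrow> h x) (at x)"
    by (rule Lim_transform_eventually[rotated])
  then show "Dxy q (\<lambda>x y. c * Pn q n x y) x y = c * (1 - q ^ n) * Pn q (n - 1) x y"
    unfolding Dxy_def by (simp add: tendsto_Lim h_def)
qed

lemma Dxy_power_Pn:
  assumes "q \<noteq> 0"
  shows "(Dxy q ^^ m) (Pn q n) = (\<lambda>x y. qfalling q n m * Pn q (n - m) x y)"
proof (induction m)
  case 0
  then show ?case by (simp add: qfalling_def)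
next
  case (Suc m)
  have "(Dxy q ^^ Suc m) (Pn q n) = Dxy q (\<lambda>x y. qfalling q n m * Pn q (n - m) x y)"
    using Suc.IH by simp
  also have "\<dots> = (\<lambda>x y. qfalling q n m * (1 - q ^ (n - m)) * Pn q (n - Suc m) x y)"
    unfolding Dxy_Pn[OF assms] by simp
  finally show ?case
    by (simp add: qfalling_def)
qed

theorem mainTheorem4:
  fixes q a x y :: complex and n :: nat
  assumes "0 < norm q" and "norm q < 1"
  shows "Upoly n x y a q = qshift q a (Pn q n) x y"
proof -
  have "q \<noteq> 0"
    using assms(1) by auto
  define T where
    "T m = (-1) ^ m * q ^ (m choose 2) * a ^ m * (qfalling q n m * Pn q (n - m) x y) / qpoch q q m"
    for m
  have "qshift q a (Pn q n) x y = (\<Sum>m. T m)"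
    unfolding qshift_def T_def Dxy_power_Pn[OF \<open>q \<noteq> 0\<close>] ..
  also have "\<dots> = (\<Sum>m\<le>n. T m)"
    by (rule suminf_finite) (auto simp: T_def qfalling_eq_0)
  also have "\<dots> = Upoly n x y a q"
    unfolding Upoly_def T_def
    by (intro sum.cong refl) (simp add: qbinom_eq_qfalling_div[OF assms(2)])
  finally show ?thesis ..
qed

end
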